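(* Let $G=(V,E)$ be a finite connected graph, $p$ a probability vector on $V$ with $p(i)>0$ for all $i$, and $M$ the transition matrix of the Markov chain on $S=(-\mathbb{N}_0)^V$ which moves from $x$ to $T_ix$ with probability $p(i)$. For each $i\in V$ fix an $i$-ordering, let $S_1=\{x^{(i)}:i\in V\}$, let $s=3(|V|-1)$, and let $\alpha'>0$ be such that $\inf_{x\in S,x'\in S_1}M^s(x,x')\ge\alpha'$. Let $\pi$ be an invariant probability distribution of $M$. Then for every $x\in S$, $$\|M^s(x,\cdot)-\pi\|_{TV}\le 1-(\alpha')^2|V|.$$
   Context: For $x\in S$ and $i\in V$, $T_ix\in S$ is obtained by first setting $x'_i=\max\{x_k:\operatorname{dist}(k,i)\le1\}+1$, $x'_j=x_j$ for $j\ne i$ (dist the graph distance), and then $(T_ix)_j=x'_j-\max_kx'_k$. An $i$-ordering is an enumeration $a^{(i)}=(a^{(i)}_1,\dots,a^{(i)}_{|V|-1})$ of $V\setminus\{i\}$ such that $a^{(i)}_1$ is a neighbour of $i$ and each $a^{(i)}_k$ is at graph distance $1$ from $\{i,a^{(i)}_1,\dots,a^{(i)}_{k-1}\}$. Let $S^{(i)}=\{y\in S:y_i=0\}$ and $x^{(i)}=T_{a^{(i)}_{|V|-1}}\cdots T_{a^{(i)}_1}y$ for $y\in S^{(i)}$ (e.g. $y\equiv0$). $\|\mu-\nu\|_{TV}=\sup_{B\subset S}|\mu(B)-\nu(B)|$. *)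

theory Defs
  imports "HOL-Probability.Probability_Mass_Function"
begin

text \<open>Graph: vertex set = the finite type 'v, adjacency E (symmetric, irreflexive).\<close>

definition graph_connected :: "('v \<Rightarrow> 'v \<Rightarrow> bool) \<Rightarrow> bool" where
  "graph_connected E \<longleftrightarrow> (\<forall>u v. E\<^sup>*\<^sup>* u v)"

definition state_space :: "('v \<Rightarrow> int) set" where
  "state_space = {x. \<forall>j. x j \<le> 0}"

text \<open>The map T_i (dist(k,i) \<le> 1 iff k = i or k adjacent to i).\<close>
definition Tmap :: "('v::finite \<Rightarrow> 'v \<Rightarrow> bool) \<Rightarrow> 'v \<Rightarrow> ('v \<Rightarrow> int) \<Rightarrow> ('v \<Rightarrow> int)" where
  "Tmap E i x =
     (let x' = x(i := Max {x k | k. k = i \<or> E k i} + 1)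
      in (\<lambda>j. x' j - Max (range x')))"

definition is_ordering :: "('v::finite \<Rightarrow> 'v \<Rightarrow> bool) \<Rightarrow> 'v \<Rightarrow> 'v list \<Rightarrow> bool" where
  "is_ordering E i a \<longleftrightarrow>
     distinct a \<and> set a = UNIV - {i} \<and>
     (\<forall>k < length a. \<exists>w \<in> insert i (set (take k a)). E (a ! k) w)"

definition chain_step :: "('v::finite \<Rightarrow> 'v \<Rightarrow> bool) \<Rightarrow> 'v pmf \<Rightarrow> ('v \<Rightarrow> int) \<Rightarrow> ('v \<Rightarrow> int) pmf" where
  "chain_step E P x = map_pmf (\<lambda>i. Tmap E i x) P"

fun chain_pow :: "('v::finite \<Rightarrow> 'v \<Rightarrow> bool) \<Rightarrow> 'v pmf \<Rightarrow> nat \<Rightarrow> ('v \<Rightarrow> int) \<Rightarrow> ('v \<Rightarrow> int) pmf" where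
  "chain_pow E P 0 x = return_pmf x"
| "chain_pow E P (Suc n) x = bind_pmf (chain_pow E P n x) (chain_step E P)"

end

theory Submission
  imports Defs
begin

text \<open>Running \<open>T\<close> along an \<open>i\<close>-ordering, starting from a state maximal at \<open>i\<close>, raises every
  visited vertex strictly above \<open>i\<close>: each one has a neighbour that is already at least as high
  as \<open>i\<close>. Hence \<open>x^(i)\<close> has its unique minimum at \<open>i\<close>, so the \<open>|V|\<close> states \<open>x^(i)\<close> are distinct.
  Both \<open>M^s(x,\<cdot>)\<close> and \<open>\<pi> = \<pi>M^s\<close> give mass at least \<open>\<alpha>'\<close> to each of them, so any event
  differs in probability by at most \<open>1 - \<alpha>'|V| \<le> 1 - \<alpha>'\<^sup>2|V|\<close>.\<close>

lemma Tmap_eq_update_minus_const: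
  "\<exists>C. Tmap E v z = (\<lambda>j. (z(v := Max {z k | k. k = v \<or> E k v} + 1)) j - C)"
  unfolding Tmap_def Let_def by blast

lemma Max_neighbourhood_ge:
  fixes E :: "'v::finite \<Rightarrow> 'v \<Rightarrow> bool"
  assumes "E w v"
  shows "z w \<le> Max {z k | k. k = v \<or> E k v}"
  using assms by (intro Max_ge) auto

lemma fold_Tmap_take_ordering:
  fixes E :: "'v::finite \<Rightarrow> 'v \<Rightarrow> bool"
  assumes sym: "\<And>u v. E u v \<Longrightarrow> E v u"
    and ord: "is_ordering E i a"
    and max_at_i: "\<And>u. z0 u \<le> z0 i"
    and "n \<le> length a"
  shows "(\<forall>w\<in>set (take n a). fold (Tmap E) (take n a) z0 i < fold (Tmap E) (take n a) z0 w) \<and>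
    (\<forall>u. u \<notin> set (take n a) \<longrightarrow> fold (Tmap E) (take n a) z0 u \<le> fold (Tmap E) (take n a) z0 i)"
  using \<open>n \<le> length a\<close>
proof (induction n)
  case 0
  then show ?case using max_at_i by simp
next
  case (Suc n)
  define z where "z = fold (Tmap E) (take n a) z0"
  define v where "v = a ! n"
  have n_less: "n < length a" using Suc by simp
  have take_Suc: "take (Suc n) a = take n a @ [v]"
    using n_less by (simp add: take_Suc_conv_app_nth v_def)
  have above: "\<forall>w\<in>set (take n a). z i < z w" and below: "\<forall>u. u \<notin> set (take n a) \<longrightarrow> z u \<le> z i"
    using Suc z_def by auto
  have "v \<noteq> i" using ord n_less unfolding is_ordering_def v_def
    by (metis DiffE insertI1 nth_mem)
  obtain w where w: "w \<in> insert i (set (take n a))" "E v w"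
    using ord n_less unfolding is_ordering_def v_def by blast
  have "z i \<le> z w" using w(1) above by (cases "w = i") auto
  also have "z w \<le> Max {z k | k. k = v \<or> E k v}"
    using Max_neighbourhood_ge sym w(2) by blast
  finally have raised: "z i < Max {z k | k. k = v \<or> E k v} + 1" by linarith
  obtain C where C: "Tmap E v z = (\<lambda>j. (z(v := Max {z k | k. k = v \<or> E k v} + 1)) j - C)"
    using Tmap_eq_update_minus_const by blast
  have "fold (Tmap E) (take (Suc n) a) z0 = Tmap E v z"
    unfolding take_Suc z_def by simp
  then show ?case unfolding C using above below \<open>v \<noteq> i\<close> raised take_Suc by auto
qed

lemma fold_Tmap_ordering_strict_min:
  fixes E :: "'v::finite \<Rightarrow> 'v \<Rightarrow> bool"
  assumes sym: "\<And>u v. E u v \<Longrightarrow> E v u"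
    and ord: "is_ordering E i a"
    and max_at_i: "\<And>u. z0 u \<le> z0 i"
    and "w \<noteq> i"
  shows "fold (Tmap E) a z0 i < fold (Tmap E) a z0 w"
proof -
  have "w \<in> set a" using ord \<open>w \<noteq> i\<close> unfolding is_ordering_def by auto
  then show ?thesis using fold_Tmap_take_ordering[of E i a z0 "length a"] sym ord max_at_i by auto
qed

lemma inj_fold_Tmap_orderings:
  fixes E :: "'v::finite \<Rightarrow> 'v \<Rightarrow> bool"
  assumes sym: "\<And>u v. E u v \<Longrightarrow> E v u"
    and ord: "\<And>i. is_ordering E i (ord i)"
    and max_at_i: "\<And>i u. y i u \<le> y i i"
  shows "inj (\<lambda>i. fold (Tmap E) (ord i) (y i))"
proof (rule injI, rule ccontr)
  fix i j
  assume eq: "fold (Tmap E) (ord i) (y i) = fold (Tmap E) (ord j) (y j)" and "i \<noteq> j"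
  have "fold (Tmap E) (ord i) (y i) i < fold (Tmap E) (ord i) (y i) j"
    using fold_Tmap_ordering_strict_min[of E i "ord i" "y i" j] sym ord max_at_i \<open>i \<noteq> j\<close> by auto
  moreover have "fold (Tmap E) (ord j) (y j) j < fold (Tmap E) (ord j) (y j) i"
    using fold_Tmap_ordering_strict_min[of E j "ord j" "y j" i] sym ord max_at_i \<open>i \<noteq> j\<close> by auto
  ultimately show False using eq by simp
qed

lemma prob_diff_le_one_minus_common_mass:
  fixes \<mu> \<nu> :: "'a pmf"
  assumes fin: "finite C" and lb: "\<And>c. c \<in> C \<Longrightarrow> a \<le> pmf \<mu> c \<and> a \<le> pmf \<nu> c"
  shows "measure_pmf.prob \<mu> B - measure_pmf.prob \<nu> B \<le> 1 - a * card C"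
proof -
  have "measure_pmf.prob \<mu> B + measure_pmf.prob \<mu> (C - B) = measure_pmf.prob \<mu> (B \<union> (C - B))"
    by (intro measure_pmf.finite_measure_Union[symmetric]) auto
  also have "\<dots> \<le> 1" by simp
  finally have mu_B: "measure_pmf.prob \<mu> B \<le> 1 - sum (pmf \<mu>) (C - B)"
    using fin by (simp add: measure_measure_pmf_finite)
  have "sum (pmf \<nu>) (B \<inter> C) = measure_pmf.prob \<nu> (B \<inter> C)"
    using fin by (simp add: measure_measure_pmf_finite)
  also have "\<dots> \<le> measure_pmf.prob \<nu> B"
    by (intro measure_pmf.finite_measure_mono) auto
  finally have nu_B: "sum (pmf \<nu>) (B \<inter> C) \<le> measure_pmf.prob \<nu> B" .
  have "a * card (C - B) \<le> sum (pmf \<mu>) (C - B)" and "a * card (B \<inter> C) \<le> sum (pmf \<nu>) (B \<inter> C)"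
    using sum_mono[of "C - B" "\<lambda>_. a" "pmf \<mu>"] sum_mono[of "B \<inter> C" "\<lambda>_. a" "pmf \<nu>"] lb
    by (auto simp: mult.commute)
  moreover have "real (card (C - B)) + real (card (B \<inter> C)) = real (card C)"
    using fin by (metis Int_commute card_Int_Diff inf.cobounded1 of_nat_add add.commute finite_Int)
  ultimately show ?thesis using mu_B nu_B by (smt (verit, best) distrib_left)
qed

lemma bind_chain_pow_invariant:
  assumes "bind_pmf \<pi> (chain_step E P) = \<pi>"
  shows "bind_pmf \<pi> (chain_pow E P n) = \<pi>"
proof (induction n)
  case 0
  then show ?case by (simp add: bind_return_pmf')
next
  case (Suc n)
  have "chain_pow E P (Suc n) = (\<lambda>x. bind_pmf (chain_pow E P n x) (chain_step E P))"
    by (rule ext) simp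
  then have "bind_pmf \<pi> (chain_pow E P (Suc n)) = bind_pmf (bind_pmf \<pi> (chain_pow E P n)) (chain_step E P)"
    by (simp add: bind_assoc_pmf)
  then show ?case using Suc assms by metis
qed

lemma invariant_pmf_ge_uniform_lower_bound:
  assumes inv: "bind_pmf \<pi> (chain_step E P) = \<pi>"
    and supp: "set_pmf \<pi> \<subseteq> S"
    and lb: "\<And>x. x \<in> S \<Longrightarrow> a \<le> pmf (chain_pow E P n x) c"
  shows "a \<le> pmf \<pi> c"
proof -
  have "a \<le> (\<integral>x. pmf (chain_pow E P n x) c \<partial>measure_pmf \<pi>)"
  proof (rule measure_pmf.integral_ge_const)
    show "integrable (measure_pmf \<pi>) (\<lambda>x. pmf (chain_pow E P n x) c)"
      by (intro measure_pmf.integrable_const_bound[where B=1]) (auto simp: pmf_le_1)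
    show "AE x in measure_pmf \<pi>. a \<le> pmf (chain_pow E P n x) c"
      using supp lb by (auto intro!: AE_pmfI)
  qed
  also have "\<dots> = pmf \<pi> c"
    using bind_chain_pow_invariant[OF inv, of n] pmf_bind by metis
  finally show ?thesis .
qed

theorem mainTheorem6:
  fixes E :: "'v::finite \<Rightarrow> 'v \<Rightarrow> bool"
    and P :: "'v pmf"
    and ord :: "'v \<Rightarrow> 'v list"
    and y :: "'v \<Rightarrow> ('v \<Rightarrow> int)"
    and \<alpha>' :: real
    and \<pi> :: "('v \<Rightarrow> int) pmf"
  assumes sym: "\<And>u v. E u v \<Longrightarrow> E v u"
    and irrefl: "\<And>v. \<not> E v v"
    and conn: "graph_connected E"
    and ppos: "\<And>i. pmf P i > 0"
    and ord: "\<And>i. is_ordering E i (ord i)"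
    and y: "\<And>i. y i \<in> state_space \<and> y i i = 0"
    and apos: "\<alpha>' > 0"
    and alpha: "\<forall>x \<in> state_space. \<forall>x' \<in> (\<lambda>i. fold (Tmap E) (ord i) (y i)) ` UNIV.
                  pmf (chain_pow E P (3 * (CARD('v) - 1)) x) x' \<ge> \<alpha>'"
    and pi_S: "set_pmf \<pi> \<subseteq> state_space"
    and pi_inv: "bind_pmf \<pi> (chain_step E P) = \<pi>"
  shows "\<forall>x \<in> state_space.
           (SUP B \<in> Pow state_space.
              \<bar>measure_pmf.prob (chain_pow E P (3 * (CARD('v) - 1)) x) B - measure_pmf.prob \<pi> B\<bar>)
           \<le> 1 - \<alpha>'^2 * real (CARD('v))"
proof
  fix x :: "'v \<Rightarrow> int" assume "x \<in> state_space"
  define s where "s = 3 * (CARD('v) - 1)"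
  define C where "C = range (\<lambda>i. fold (Tmap E) (ord i) (y i))"
  have "card C = CARD('v)"
    using inj_fold_Tmap_orderings[OF sym ord] y unfolding C_def state_space_def
    by (simp add: card_image)
  have mass: "\<alpha>' \<le> pmf (chain_pow E P s x) c \<and> \<alpha>' \<le> pmf \<pi> c" if "c \<in> C" for c
  proof
    show "\<alpha>' \<le> pmf (chain_pow E P s x) c"
      using alpha \<open>x \<in> state_space\<close> that unfolding C_def s_def by blast
    show "\<alpha>' \<le> pmf \<pi> c"
      using alpha that unfolding C_def s_def
      by (intro invariant_pmf_ge_uniform_lower_bound[OF pi_inv pi_S]) blast
  qed
  obtain c where "c \<in> C" unfolding C_def by blast
  then have "\<alpha>' \<le> 1" using mass pmf_le_1[of "chain_pow E P s x" c] by fastforce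
  then have weaker: "1 - \<alpha>' * card C \<le> 1 - \<alpha>'^2 * real (CARD('v))"
    using apos \<open>card C = CARD('v)\<close> by (simp add: power2_eq_square mult_right_mono)
  have "\<bar>measure_pmf.prob (chain_pow E P s x) B - measure_pmf.prob \<pi> B\<bar> \<le> 1 - \<alpha>'^2 * real (CARD('v))" for B
  proof -
    have "finite C" unfolding C_def by simp
    then have "measure_pmf.prob (chain_pow E P s x) B - measure_pmf.prob \<pi> B \<le> 1 - \<alpha>' * card C"
      and "measure_pmf.prob \<pi> B - measure_pmf.prob (chain_pow E P s x) B \<le> 1 - \<alpha>' * card C"
      using prob_diff_le_one_minus_common_mass mass by blast+
    then show ?thesis using weaker by linarith
  qed
  then show "(SUP B \<in> Pow state_space.
              \<bar>measure_pmf.prob (chain_pow E P (3 * (CARD('v) - 1)) x) B - measure_pmf.prob \<pi> B\<bar>)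
           \<le> 1 - \<alpha>'^2 * real (CARD('v))"
    unfolding s_def[symmetric] by (intro cSUP_least) auto
qed

end
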